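(* Let $X$ be a CAT(0) Euclidean polygonal complex and let $x_1,x_2,x_3,x_4\in X$ be such that $\overline{x_1x_2}\cap\overline{x_3x_4}$ is a segment. Then $$\bigcap_{1\le i<j<k\le 4}\blacktriangle(x_i,x_j,x_k)=\overline{x_1x_2}\cap\overline{x_3x_4}.$$
   Context: A CAT(0) Euclidean polygonal complex is a 2-dimensional polygonal complex whose cells are convex Euclidean polygons, with its induced length metric, assumed CAT(0). $\overline{ab}$ denotes the unique geodesic between $a,b$; $\triangle(x,y,z)=\overline{xy}\cup\overline{yz}\cup\overline{zx}$. The full triangle $\blacktriangle(x,y,z)$ is the union of $\triangle(x,y,z)$ with the set of points $p\in X\setminus\triangle(x,y,z)$ for which $\triangle(x,y,z)$ is not null-homotopic in $X\setminus\{p\}$. *)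

theory Defs
  imports "HOL-Analysis.Analysis"
begin

definition convex_polygon :: "(real^2) set \<Rightarrow> bool" where
  "convex_polygon P \<longleftrightarrow> polytope P \<and> interior P \<noteq> {}"

type_synonym 'a cell = "(real^2) set \<times> (real^2 \<Rightarrow> 'a)"

text \<open>A family of cells (polygon P together with its characteristic map into the space)
  forms a polygonal complex structure on the whole type 'a: every cell map is injective,
  the cells cover the space, and whenever two cells meet at a point they are glued along
  faces containing that point via an isometry of those faces.\<close>
definition polygonal_complex :: "'a cell set \<Rightarrow> bool" where
  "polygonal_complex C \<longleftrightarrow>
     (\<forall>(P, f)\<in>C. convex_polygon P \<and> inj_on f P) \<and>
     (\<Union>(P, f)\<in>C. f ` P) = UNIV \<and>
     (\<forall>(P, f)\<in>C. \<forall>(Q, g)\<in>C. \<forall>x\<in>P. \<forall>x'\<in>Q. f x = g x' \<longrightarrow>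
        (\<exists>T T' h. T face_of P \<and> x \<in> T \<and> T' face_of Q \<and> h ` T = T' \<and>
           (\<forall>u\<in>T. \<forall>v\<in>T. dist (h u) (h v) = dist u v) \<and>
           (\<forall>y\<in>T. g (h y) = f y)))"

text \<open>m-strings: lists of (cell, start point, end point), each piece inside one cell,
  consecutive pieces matching in the space.\<close>
definition mstring :: "'a cell set \<Rightarrow> 'a \<Rightarrow> 'a \<Rightarrow> ('a cell \<times> (real^2) \<times> (real^2)) list \<Rightarrow> bool" where
  "mstring C x y L \<longleftrightarrow> L \<noteq> [] \<and>
     (\<forall>(c, u, v)\<in>set L. c \<in> C \<and> u \<in> fst c \<and> v \<in> fst c) \<and>
     (case hd L of (c, u, v) \<Rightarrow> snd c u = x) \<and>
     (case last L of (c, u, v) \<Rightarrow> snd c v = y) \<and>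
     (\<forall>i. Suc i < length L \<longrightarrow>
        (case L ! i of (c, u, v) \<Rightarrow> snd c v) = (case L ! Suc i of (c, u, v) \<Rightarrow> snd c u))"

definition mstring_length :: "('a cell \<times> (real^2) \<times> (real^2)) list \<Rightarrow> real" where
  "mstring_length L = sum_list (map (\<lambda>(c, u, v). dist u v) L)"

definition induced_dist :: "'a cell set \<Rightarrow> 'a \<Rightarrow> 'a \<Rightarrow> real" where
  "induced_dist C x y = Inf {mstring_length L | L. mstring C x y L}"

definition euclidean_polygonal_complex :: "'a::metric_space cell set \<Rightarrow> bool" where
  "euclidean_polygonal_complex C \<longleftrightarrow> polygonal_complex C \<and> (\<forall>x y. dist x y = induced_dist C x y)"

definition geodesic_path :: "'a::metric_space \<Rightarrow> 'a \<Rightarrow> (real \<Rightarrow> 'a) \<Rightarrow> bool" where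
  "geodesic_path x y \<gamma> \<longleftrightarrow> \<gamma> 0 = x \<and> \<gamma> 1 = y \<and>
     (\<forall>s\<in>{0..1}. \<forall>t\<in>{0..1}. dist (\<gamma> s) (\<gamma> t) = \<bar>s - t\<bar> * dist x y)"

definition CAT0 :: "'a::metric_space itself \<Rightarrow> bool" where
  "CAT0 _ \<longleftrightarrow>
     (\<forall>x y::'a. \<exists>\<gamma>. geodesic_path x y \<gamma>) \<and>
     (\<forall>(x::'a) y z \<gamma>1 \<gamma>2 \<gamma>3 (a::real^2) b c.
        geodesic_path x y \<gamma>1 \<and> geodesic_path y z \<gamma>2 \<and> geodesic_path z x \<gamma>3 \<and>
        dist a b = dist x y \<and> dist b c = dist y z \<and> dist c a = dist z x \<longrightarrow>
        (let T = {(\<gamma>1 t, a + t *\<^sub>R (b - a)) | t. t \<in> {0..1}} \<union>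
                 {(\<gamma>2 t, b + t *\<^sub>R (c - b)) | t. t \<in> {0..1}} \<union>
                 {(\<gamma>3 t, c + t *\<^sub>R (a - c)) | t. t \<in> {0..1}}
         in \<forall>(p, p')\<in>T. \<forall>(q, q')\<in>T. dist p q \<le> dist p' q'))"

definition seg :: "'a::metric_space \<Rightarrow> 'a \<Rightarrow> 'a set" where
  "seg x y = (THE S. \<exists>\<gamma>. geodesic_path x y \<gamma> \<and> S = \<gamma> ` {0..1})"

definition gpath :: "'a::metric_space \<Rightarrow> 'a \<Rightarrow> real \<Rightarrow> 'a" where
  "gpath x y = (SOME \<gamma>. geodesic_path x y \<gamma>)"

definition tri :: "'a::metric_space \<Rightarrow> 'a \<Rightarrow> 'a \<Rightarrow> 'a set" where
  "tri x y z = seg x y \<union> seg y z \<union> seg z x"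

definition tri_loop :: "'a::metric_space \<Rightarrow> 'a \<Rightarrow> 'a \<Rightarrow> real \<Rightarrow> 'a" where
  "tri_loop x y z = (gpath x y +++ gpath y z) +++ gpath z x"

definition full_tri :: "'a::metric_space \<Rightarrow> 'a \<Rightarrow> 'a \<Rightarrow> 'a set" where
  "full_tri x y z = tri x y z \<union>
     {p. p \<notin> tri x y z \<and>
         \<not> homotopic_loops (UNIV - {p}) (tri_loop x y z) (\<lambda>_. tri_loop x y z 0)}"

end

theory Submission
  imports Defs
begin

(* Only the CAT(0) geometry of X is used.
   The CAT(0) inequality makes geodesics unique, continuous in their endpoints, and non-branching:
   if the geodesics [u,b] and [a,w] overlap in a nondegenerate segment [a,b], then u, a, b, w lie
   in this order on the geodesic [u,w]. Contracting the boundary loop of a triangle along geodesics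
   towards any point v shows that the full triangle lies in the cone of geodesics from v to the
   triangle.
   After renaming, [x1,x2] and [x3,x4] pass through a and then b, so by non-branching the same
   holds for [x3,x2] and [x1,x4]. Using the cones with apex x3 over the triangles x1x2x3 and
   x1x3x4, a point p of all four full triangles lies on [a,x2] and [a,x4], hence on [a,b], or in
   the cone from x3 over [x1,a]; symmetrically, with apex x2, it lies on [a,b] or in the cone from
   x2 over [x4,b]. These two cones are disjoint: a common point would give paths from x3 to x2 and
   from x1 to x4 whose total length is shorter than d(x3,x2) + d(x1,x4) by 2 d(a,b). *)

section \<open>Comparison triangles and geodesic paths\<close>

lemma dist_points_on_sides_sq:
  fixes a b c :: "'a::real_inner"
  shows "(dist (a + s *\<^sub>R (b - a)) (a + t *\<^sub>R (c - a)))\<^sup>2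
       = s\<^sup>2 * (dist a b)\<^sup>2 + t\<^sup>2 * (dist a c)\<^sup>2
         - s * t * ((dist a b)\<^sup>2 + (dist a c)\<^sup>2 - (dist b c)\<^sup>2)"
proof -
  define u w where "u = b - a" and "w = c - a"
  have "dist (a + s *\<^sub>R (b - a)) (a + t *\<^sub>R (c - a)) = norm (s *\<^sub>R u - t *\<^sub>R w)"
    "dist a b = norm u" "dist a c = norm w" "dist b c = norm (u - w)"
    by (simp_all add: u_def w_def dist_norm norm_minus_commute algebra_simps)
  note norms = this
  show ?thesis
    unfolding norms power2_norm_eq_inner
    by (simp add: inner_diff inner_commute algebra_simps power2_eq_square)
qed

lemma comparison_triangle_exists:
  fixes A B C :: real
  assumes "A \<le> B + C" "B \<le> A + C" "C \<le> A + B"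
  shows "\<exists>a b c :: real^2. dist a b = A \<and> dist b c = C \<and> dist c a = B"
proof -
  have dist_real2: "dist u w = sqrt ((u$1 - w$1)\<^sup>2 + (u$2 - w$2)\<^sup>2)" for u w :: "real^2"
    by (simp add: dist_norm norm_vec_def L2_set_def sum_2)
  have nonneg: "0 \<le> A" "0 \<le> B" "0 \<le> C" using assms by linarith+
  show ?thesis
  proof (cases "A = 0")
    case True
    then have "B = C" using assms by linarith
    then show ?thesis
      using True nonneg by (intro exI[of _ 0] exI[of _ "vector [B, 0]"]) (simp add: dist_real2)
  next
    case False
    define cx where "cx = (A\<^sup>2 + B\<^sup>2 - C\<^sup>2) / (2 * A)"
    have "(A - B)\<^sup>2 \<le> C\<^sup>2" "C\<^sup>2 \<le> (A + B)\<^sup>2"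
      using assms nonneg by (simp_all add: abs_le_square_iff[symmetric] abs_le_iff)
    then have "\<bar>A\<^sup>2 + B\<^sup>2 - C\<^sup>2\<bar> \<le> 2 * A * B"
      by (simp add: abs_le_iff power2_eq_square algebra_simps)
    then have "\<bar>cx\<bar> \<le> B"
      using False nonneg by (simp add: cx_def abs_divide divide_le_eq mult_ac)
    then have cx: "cx\<^sup>2 \<le> B\<^sup>2"
      by (metis abs_le_square_iff abs_of_nonneg nonneg(2))
    define cy where "cy = sqrt (B\<^sup>2 - cx\<^sup>2)"
    have cy: "cy\<^sup>2 = B\<^sup>2 - cx\<^sup>2" using cx by (simp add: cy_def)
    have "(A - cx)\<^sup>2 + cy\<^sup>2 = C\<^sup>2"
      using False unfolding cy cx_def by (simp add: field_simps power2_eq_square)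
    then show ?thesis
      using cy nonneg
      by (intro exI[of _ 0] exI[of _ "vector [A, 0]"] exI[of _ "vector [cx, cy]"])
        (simp add: dist_real2)
  qed
qed

lemma geodesic_path_dist:
  "geodesic_path x y \<gamma> \<Longrightarrow> s \<in> {0..1} \<Longrightarrow> t \<in> {0..1} \<Longrightarrow> dist (\<gamma> s) (\<gamma> t) = \<bar>s - t\<bar> * dist x y"
  unfolding geodesic_path_def by blast

lemma geodesic_path_ends:
  assumes "geodesic_path x y \<gamma>"
  shows "\<gamma> 0 = x" "\<gamma> 1 = y"
  using assms unfolding geodesic_path_def by blast+

lemma geodesic_path_dist_ends:
  assumes "geodesic_path x y \<gamma>" "s \<in> {0..1}"
  shows "dist x (\<gamma> s) = s * dist x y" "dist (\<gamma> s) y = (1 - s) * dist x y"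
  using geodesic_path_dist[OF assms(1), of 0 s] geodesic_path_dist[OF assms(1), of s 1] assms
  by (auto simp: geodesic_path_ends[OF assms(1)])

lemma geodesic_path_reverse:
  assumes "geodesic_path x y \<gamma>"
  shows "geodesic_path y x (\<lambda>t. \<gamma> (1 - t))"
  unfolding geodesic_path_def
proof (intro conjI ballI)
  fix s t :: real assume "s \<in> {0..1}" "t \<in> {0..1}"
  then show "dist (\<gamma> (1 - s)) (\<gamma> (1 - t)) = \<bar>s - t\<bar> * dist y x"
    using geodesic_path_dist[OF assms, of "1 - s" "1 - t"]
    by (simp add: dist_commute abs_minus_commute)
qed (simp_all add: geodesic_path_ends[OF assms])

section \<open>Unique geodesics and betweenness\<close>

locale CAT0_space =
  assumes CAT0: "CAT0 TYPE('a::metric_space)"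
begin

lemma CAT0_dist_geodesics:
  fixes x y z :: 'a
  assumes \<gamma>: "geodesic_path x y \<gamma>" and \<delta>: "geodesic_path x z \<delta>"
    and s: "s \<in> {0..1}" and t: "t \<in> {0..1}"
  shows "(dist (\<gamma> s) (\<delta> t))\<^sup>2 \<le> s\<^sup>2 * (dist x y)\<^sup>2 + t\<^sup>2 * (dist x z)\<^sup>2
           - s * t * ((dist x y)\<^sup>2 + (dist x z)\<^sup>2 - (dist y z)\<^sup>2)"
proof -
  obtain a b c :: "real^2"
    where abc: "dist a b = dist x y" "dist b c = dist y z" "dist c a = dist z x"
    using comparison_triangle_exists[of "dist x y" "dist z x" "dist y z"]
    by (metis dist_commute dist_triangle)
  obtain \<eta> where \<eta>: "geodesic_path y z \<eta>" using CAT0 unfolding CAT0_def by blast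
  note comparison = CAT0[unfolded CAT0_def Let_def, THEN conjunct2, rule_format,
      of x y \<gamma> z \<eta> "\<lambda>r. \<delta> (1 - r)" a b c]
  have "(\<gamma> s, a + s *\<^sub>R (b - a)) \<in> {(\<gamma> r, a + r *\<^sub>R (b - a)) |r. r \<in> {0..1}}"
    using s by blast
  moreover have "(\<delta> t, c + (1 - t) *\<^sub>R (a - c)) \<in> {(\<delta> (1 - r), c + r *\<^sub>R (a - c)) |r. r \<in> {0..1}}"
    using t by force
  ultimately have "dist (\<gamma> s) (\<delta> t) \<le> dist (a + s *\<^sub>R (b - a)) (c + (1 - t) *\<^sub>R (a - c))"
    using comparison \<gamma> \<eta> geodesic_path_reverse[OF \<delta>] abc by blast
  also have "c + (1 - t) *\<^sub>R (a - c) = a + t *\<^sub>R (c - a)"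
    by (simp add: algebra_simps)
  finally have "(dist (\<gamma> s) (\<delta> t))\<^sup>2 \<le> (dist (a + s *\<^sub>R (b - a)) (a + t *\<^sub>R (c - a)))\<^sup>2"
    by (simp add: power_mono)
  then show ?thesis
    unfolding dist_points_on_sides_sq using abc by (simp add: dist_commute)
qed

lemma gpath_geodesic: "geodesic_path (x::'a) y (gpath x y)"
proof -
  have "\<exists>\<gamma>. geodesic_path x y \<gamma>" using CAT0 unfolding CAT0_def by blast
  then show ?thesis unfolding gpath_def by (rule someI_ex)
qed

lemma geodesic_path_unique:
  assumes "geodesic_path (x::'a) y \<gamma>" "geodesic_path x y \<delta>" "s \<in> {0..1}"
  shows "\<gamma> s = \<delta> s"
proof -
  have "(dist (\<gamma> s) (\<delta> s))\<^sup>2 \<le> 0"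
    using CAT0_dist_geodesics[OF assms(1,2,3,3)] by (simp add: power2_eq_square algebra_simps)
  then show ?thesis by simp
qed

lemma seg_eq_gpath_image: "seg (x::'a) y = gpath x y ` {0..1}"
  unfolding seg_def
proof (rule the_equality)
  show "\<exists>\<gamma>. geodesic_path x y \<gamma> \<and> gpath x y ` {0..1} = \<gamma> ` {0..1}"
    using gpath_geodesic by blast
next
  fix S assume "\<exists>\<gamma>. geodesic_path x y \<gamma> \<and> S = \<gamma> ` {0..1}"
  then obtain \<gamma> where "geodesic_path x y \<gamma>" "S = \<gamma> ` {0..1}" by blast
  then show "S = gpath x y ` {0..1}"
    using geodesic_path_unique[OF _ gpath_geodesic] by (auto intro: image_cong)
qed

lemma mem_seg_iff_dist: "(z::'a) \<in> seg x y \<longleftrightarrow> dist x z + dist z y = dist x y"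
proof
  assume "z \<in> seg x y"
  then obtain s where "s \<in> {0..1}" "z = gpath x y s" by (auto simp: seg_eq_gpath_image)
  then show "dist x z + dist z y = dist x y"
    using geodesic_path_dist_ends[OF gpath_geodesic] by (simp add: algebra_simps)
next
  assume z: "dist x z + dist z y = dist x y"
  show "z \<in> seg x y"
  proof (cases "x = y")
    case True
    then have "z = gpath x y 0"
      using z geodesic_path_ends(1)[OF gpath_geodesic] by (simp add: dist_commute)
    then show ?thesis by (simp add: seg_eq_gpath_image)
  next
    case False
    define t where "t = dist x z / dist x y"
    have "dist x z \<le> dist x y" using z zero_le_dist[of z y] by linarith
    then have t: "t \<in> {0..1}" using False by (simp add: t_def divide_le_eq_1)
    \<comment> \<open>the CAT(0) inequality puts z at parameter t on the geodesic from x to y\<close>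
    have "(dist (gpath x y t) (gpath x z 1))\<^sup>2 \<le> t\<^sup>2 * (dist x y)\<^sup>2 + (dist x z)\<^sup>2
            - t * ((dist x y)\<^sup>2 + (dist x z)\<^sup>2 - (dist y z)\<^sup>2)"
      using CAT0_dist_geodesics[OF gpath_geodesic gpath_geodesic t, of 1] by simp
    also have "\<dots> = 0"
    proof -
      have yz: "dist y z = dist x y - dist x z" using z by (simp add: dist_commute)
      show ?thesis unfolding yz t_def using False by (simp add: power2_eq_square field_simps)
    qed
    finally have "gpath x y t = z"
      using geodesic_path_ends(2)[OF gpath_geodesic] by simp
    then show ?thesis using t by (auto simp: seg_eq_gpath_image)
  qed
qed

lemma seg_commute: "seg (x::'a) y = seg y x"
  by (auto simp: mem_seg_iff_dist dist_commute add.commute)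

lemma ends_mem_seg: "(x::'a) \<in> seg x y" "y \<in> seg x y"
  by (simp_all add: mem_seg_iff_dist)

lemma seg_subset_seg_left: "(z::'a) \<in> seg x y \<Longrightarrow> seg x z \<subseteq> seg x y"
  unfolding mem_seg_iff_dist subset_iff
  by (smt (verit, best) dist_triangle)

lemma seg_subset_seg_right: "(z::'a) \<in> seg x y \<Longrightarrow> seg z y \<subseteq> seg x y"
  using seg_subset_seg_left[of z y x] by (simp add: seg_commute)

lemma mem_seg_shrink: "(a::'a) \<in> seg u w \<Longrightarrow> b \<in> seg a w \<Longrightarrow> a \<in> seg u b"
  unfolding mem_seg_iff_dist using dist_triangle[of u w b] dist_triangle[of u b a] by linarith

lemma seg_split:
  assumes m: "(m::'a) \<in> seg u w"
  shows "seg u w = seg u m \<union> seg m w"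
proof
  show "seg u m \<union> seg m w \<subseteq> seg u w"
    using seg_subset_seg_left[OF m] seg_subset_seg_right[OF m] by blast
next
  show "seg u w \<subseteq> seg u m \<union> seg m w"
  proof
    fix z assume "z \<in> seg u w"
    then obtain t where t: "t \<in> {0..1}" "z = gpath u w t" by (auto simp: seg_eq_gpath_image)
    obtain s where s: "s \<in> {0..1}" "m = gpath u w s" using m by (auto simp: seg_eq_gpath_image)
    note dists = geodesic_path_dist[OF gpath_geodesic[of u w] s(1) t(1)]
      geodesic_path_dist_ends[OF gpath_geodesic[of u w] s(1)]
      geodesic_path_dist_ends[OF gpath_geodesic[of u w] t(1)]
    show "z \<in> seg u m \<union> seg m w"
    proof (cases "t \<le> s")
      case True
      then have "z \<in> seg u m"
        using dists s t by (simp add: mem_seg_iff_dist dist_commute algebra_simps)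
      then show ?thesis ..
    next
      case False
      then have "z \<in> seg m w"
        using dists s t by (simp add: mem_seg_iff_dist dist_commute algebra_simps)
      then show ?thesis ..
    qed
  qed
qed

lemma mem_seg_order:
  assumes "(a::'a) \<in> seg x y" "b \<in> seg x y"
  shows "(a \<in> seg x b \<and> b \<in> seg a y) \<or> (a \<in> seg y b \<and> b \<in> seg a x)"
proof -
  have "b \<in> seg a x \<or> b \<in> seg a y"
    using assms(2) seg_split[OF assms(1)] seg_commute[of x a] by blast
  then show ?thesis
    using mem_seg_shrink[OF assms(1), of b] mem_seg_shrink[of a y x b] assms(1) seg_commute[of x y]
    by blast
qed

(* dist a b = 2 * h says that the geodesics from m to u and to w leave m in opposite directions *)

lemma mem_seg_if_straight_angle:
  assumes a: "(a::'a) \<in> seg m u" and b: "b \<in> seg m w"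
    and h: "dist m a = h" "dist m b = h" "dist a b = 2 * h" "h > 0"
  shows "m \<in> seg u w"
proof -
  obtain s where s: "s \<in> {0..1}" "a = gpath m u s" using a by (auto simp: seg_eq_gpath_image)
  obtain t where t: "t \<in> {0..1}" "b = gpath m w t" using b by (auto simp: seg_eq_gpath_image)
  define L1 L2 C where "L1 = dist m u" and "L2 = dist m w" and "C = dist u w"
  have sL1: "s * L1 = h" and tL2: "t * L2 = h"
    using geodesic_path_dist_ends(1)[OF gpath_geodesic s(1)]
      geodesic_path_dist_ends(1)[OF gpath_geodesic t(1)] s(2) t(2) h
    unfolding L1_def L2_def by auto
  have "(2 * h)\<^sup>2 \<le> (s * L1)\<^sup>2 + (t * L2)\<^sup>2 - s * t * (L1\<^sup>2 + L2\<^sup>2 - C\<^sup>2)"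
    using CAT0_dist_geodesics[OF gpath_geodesic[of m u] gpath_geodesic[of m w] s(1) t(1)]
      s(2) t(2) h
    unfolding L1_def L2_def C_def by (simp add: power_mult_distrib)
  then have "s * t * (L1\<^sup>2 + L2\<^sup>2 - C\<^sup>2) \<le> - 2 * h\<^sup>2"
    unfolding sL1 tL2 by (simp add: power2_eq_square)
  then have "s * t * (L1\<^sup>2 + L2\<^sup>2 - C\<^sup>2) * (L1 * L2) \<le> - 2 * h\<^sup>2 * (L1 * L2)"
    by (rule mult_right_mono) (simp add: L1_def L2_def)
  also have "s * t * (L1\<^sup>2 + L2\<^sup>2 - C\<^sup>2) * (L1 * L2) = (s * L1) * (t * L2) * (L1\<^sup>2 + L2\<^sup>2 - C\<^sup>2)"
    by (simp add: algebra_simps)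
  finally have "h\<^sup>2 * (L1\<^sup>2 + L2\<^sup>2 - C\<^sup>2) \<le> h\<^sup>2 * (- 2 * L1 * L2)"
    unfolding sL1 tL2 by (simp add: power2_eq_square algebra_simps)
  then have "L1\<^sup>2 + L2\<^sup>2 - C\<^sup>2 \<le> - 2 * L1 * L2"
    by (rule mult_left_le_imp_le) (use h(4) in simp)
  then have "(L1 + L2)\<^sup>2 \<le> C\<^sup>2"
    by (simp add: power2_eq_square algebra_simps)
  then have "L1 + L2 \<le> C"
    by (rule power2_le_imp_le) (simp add: C_def)
  then show ?thesis
    using dist_triangle[of u w m] unfolding mem_seg_iff_dist L1_def L2_def C_def
    by (simp add: dist_commute)
qed

lemma mem_seg_concat:
  assumes ne: "(a::'a) \<noteq> b" and a: "a \<in> seg u b" and b: "b \<in> seg a w"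
  shows "a \<in> seg u w"
proof -
  define m where "m = gpath a b (1/2)"
  have m: "m \<in> seg a b" by (auto simp: m_def seg_eq_gpath_image)
  have "dist a m = dist a b / 2" "dist m b = dist a b / 2"
    using geodesic_path_dist_ends[OF gpath_geodesic, of "1/2" a b] by (simp_all add: m_def)
  moreover have "a \<in> seg u m" by (rule mem_seg_shrink[OF a m])
  moreover have "b \<in> seg m w"
    using mem_seg_shrink[of b w a m] b m by (simp add: seg_commute)
  ultimately have "m \<in> seg u w"
    using ne by (intro mem_seg_if_straight_angle[of a m u b w "dist a b / 2"])
      (simp_all add: seg_commute dist_commute)
  then show ?thesis
    using seg_subset_seg_left \<open>a \<in> seg u m\<close> by blast
qed

end

section \<open>Full triangles lie in geodesic cones\<close>

lemma homotopic_loops_constI: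
  assumes "path_component S a b"
  shows "homotopic_loops S (\<lambda>_. a) (\<lambda>_. b)"
proof -
  obtain g where g: "path g" "path_image g \<subseteq> S" "pathstart g = a" "pathfinish g = b"
    using assms unfolding path_component_def by blast
  have "continuous_on ({0..1} \<times> {0..1}) (g \<circ> fst)"
    using g(1) unfolding path_def
    by (fastforce intro!: continuous_intros elim: continuous_on_subset)
  with g show ?thesis
    by (auto simp: homotopic_loops_def homotopic_with_def path_defs Pi_iff
        intro!: exI[of _ "g \<circ> fst"])
qed

definition geodesic_cone :: "'a::metric_space \<Rightarrow> 'a set \<Rightarrow> 'a set" where
  "geodesic_cone v S = (\<Union>q\<in>S. seg v q)"

context CAT0_space
begin

lemma dist_gpath_endpoints_le:
  assumes "s \<in> {0..1}"
  shows "dist (gpath v w s) (gpath v w' s) \<le> s * dist w (w'::'a)"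
proof -
  have "(dist (gpath v w s) (gpath v w' s))\<^sup>2 \<le> (s * dist w w')\<^sup>2"
    using CAT0_dist_geodesics[OF gpath_geodesic gpath_geodesic assms assms, of v w w']
    by (simp add: power2_eq_square algebra_simps)
  then show ?thesis
    by (rule power2_le_imp_le) (use assms in simp)
qed

lemma continuous_on_gpath: "continuous_on (UNIV \<times> {0..1}) (\<lambda>(w, s). gpath (v::'a) w s)"
proof (rule continuous_on_TimesI)
  show "local_lipschitz UNIV {0..1} (gpath v)"
  proof (rule local_lipschitzI)
    fix w :: 'a and s :: real
    have "(dist v w + 1)-lipschitz_on (cball s 1 \<inter> {0..1}) (gpath v w')" if "w' \<in> cball w 1" for w'
    proof (rule lipschitz_onI)
      fix r r' assume "r \<in> cball s 1 \<inter> {0..1}" "r' \<in> cball s 1 \<inter> {0..1}"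
      then have "dist (gpath v w' r) (gpath v w' r') = dist v w' * dist r r'"
        using geodesic_path_dist[OF gpath_geodesic] by (simp add: dist_real_def mult.commute)
      also have "\<dots> \<le> (dist v w + 1) * dist r r'"
        using that dist_triangle[of v w' w] by (intro mult_right_mono) (auto simp: dist_commute)
      finally show "dist (gpath v w' r) (gpath v w' r') \<le> (dist v w + 1) * dist r r'" .
    qed simp
    then show "\<exists>u>0. \<exists>L. \<forall>w'\<in>cball w u \<inter> UNIV. L-lipschitz_on (cball s u \<inter> {0..1}) (gpath v w')"
      by (intro exI[of _ 1] conjI exI[of _ "dist v w + 1"] ballI) auto
  qed
next
  fix s :: real assume s: "s \<in> {0..1}"
  have "dist (gpath v w s) (gpath v w' s) \<le> 1 * dist w w'" for w w'
    using dist_gpath_endpoints_le[OF s, of v w w'] mult_right_mono[of s 1 "dist w w'"] s by simp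
  then have "1-lipschitz_on UNIV (\<lambda>w. gpath v w s)"
    by (intro lipschitz_onI) auto
  then show "continuous_on UNIV (\<lambda>w. gpath v w s)"
    by (rule lipschitz_on_continuous_on)
qed

lemma path_gpath:
  "path (gpath (x::'a) y)" "pathstart (gpath x y) = x" "pathfinish (gpath x y) = y"
  "path_image (gpath x y) = seg x y"
proof -
  show "path (gpath x y)"
    unfolding path_def
    by (rule continuous_on_compose2[OF continuous_on_gpath, of _ "\<lambda>s. (y, s)", simplified])
      (auto intro: continuous_intros)
qed (simp_all add: pathstart_def pathfinish_def path_image_def seg_eq_gpath_image
    geodesic_path_ends[OF gpath_geodesic])

lemma homotopic_loops_null_if_cone_avoids:
  assumes L: "path L" "pathfinish L = pathstart L" and p: "p \<notin> geodesic_cone (v::'a) (path_image L)"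
  shows "homotopic_loops (UNIV - {p}) L (\<lambda>_. L 0)"
proof -
  have avoid: "p \<notin> seg v (L s)" if "s \<in> {0..1}" for s
    using p that by (auto simp: geodesic_cone_def path_image_def)
  have "homotopic_loops (UNIV - {p}) L (\<lambda>_. v)"
    unfolding homotopic_loops
  proof (intro exI[of _ "\<lambda>x. gpath v (L (snd x)) (1 - fst x)"] conjI ballI)
    have "continuous_on ({0..1} \<times> {0..1}) (\<lambda>x::real \<times> real. L (snd x))"
      using L(1) unfolding path_def by (rule continuous_on_compose2[OF _ continuous_on_snd]) auto
    then have "continuous_on ({0..1} \<times> {0..1}) (\<lambda>x::real \<times> real. (L (snd x), 1 - fst x))"
      by (intro continuous_on_Pair continuous_intros)
    from continuous_on_compose2[OF continuous_on_gpath this]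
    show "continuous_on ({0..1} \<times> {0..1}) (\<lambda>x::real \<times> real. gpath v (L (snd x)) (1 - fst x))"
      by force
    show "(\<lambda>x. gpath v (L (snd x)) (1 - fst x)) \<in> {0..1} \<times> {0..1} \<rightarrow> UNIV - {p}"
    proof
      fix x :: "real \<times> real" assume "x \<in> {0..1} \<times> {0..1}"
      then show "gpath v (L (snd x)) (1 - fst x) \<in> UNIV - {p}"
        using avoid[of "snd x"] by (auto simp: seg_eq_gpath_image)
    qed
  qed (use L(2) in
      \<open>simp_all add: pathstart_def pathfinish_def geodesic_path_ends[OF gpath_geodesic]\<close>)
  moreover have "path_component (UNIV - {p}) v (L 0)"
    unfolding path_component_def
  proof (intro exI[of _ "gpath v (L 0)"] conjI)
    show "path_image (gpath v (L 0)) \<subseteq> UNIV - {p}"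
      using avoid[of 0] by (auto simp: path_gpath)
  qed (simp_all add: path_gpath)
  ultimately show ?thesis
    using homotopic_loops_trans homotopic_loops_constI by blast
qed

lemma path_tri_loop:
  "path (tri_loop x y z)" "pathfinish (tri_loop x y z) = pathstart (tri_loop x y z)"
  "path_image (tri_loop (x::'a) y z) \<subseteq> tri x y z"
  using path_image_join_subset[of "gpath x y +++ gpath y z" "gpath z x"]
    path_image_join_subset[of "gpath x y" "gpath y z"]
  by (auto simp: tri_loop_def tri_def path_gpath)

lemma full_tri_subset_geodesic_cone: "full_tri x y z \<subseteq> geodesic_cone (v::'a) (tri x y z)"
proof
  fix p assume p: "p \<in> full_tri x y z"
  show "p \<in> geodesic_cone v (tri x y z)"
  proof (cases "p \<in> tri x y z")
    case True
    then show ?thesis using ends_mem_seg(2) by (auto simp: geodesic_cone_def)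
  next
    case False
    have "p \<notin> geodesic_cone v (path_image (tri_loop x y z)) \<Longrightarrow>
        homotopic_loops (UNIV - {p}) (tri_loop x y z) (\<lambda>_. tri_loop x y z 0)"
      by (rule homotopic_loops_null_if_cone_avoids[OF path_tri_loop(1,2)])
    then show ?thesis
      using p False path_tri_loop(3)[of x y z] by (auto simp: full_tri_def geodesic_cone_def)
  qed
qed

end

section \<open>Four full triangles meeting two overlapping geodesics\<close>

context CAT0_space
begin

lemma tri_commute: "tri (x::'a) y z = tri y x z"
  by (auto simp: tri_def seg_commute)

lemma tri_rotate: "tri (x::'a) y z = tri y z x"
  by (auto simp: tri_def)

lemma geodesic_cone_tri_cases:
  assumes p: "p \<in> geodesic_cone v (tri u w v)" and a: "(a::'a) \<in> seg u w" "a \<in> seg v w"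
  shows "p \<in> geodesic_cone v (seg u a) \<or> p \<in> seg a w"
proof -
  have on_vw: "p \<in> geodesic_cone v (seg u a) \<or> p \<in> seg a w" if "p \<in> seg v w"
    using that seg_split[OF a(2)] ends_mem_seg(2)[of a u] unfolding geodesic_cone_def by blast
  obtain q where q: "q \<in> seg u w \<union> seg w v \<union> seg v u" and pq: "p \<in> seg v q"
    using p by (auto simp: geodesic_cone_def tri_def)
  consider "q \<in> seg u a" | "q \<in> seg a w" | "q \<in> seg v w" | "q \<in> seg v u"
    using q seg_split[OF a(1)] seg_commute[of w v] by blast
  then show ?thesis
  proof cases
    case 1
    then show ?thesis using pq by (auto simp: geodesic_cone_def)
  next
    case 2
    then show ?thesis using on_vw pq seg_subset_seg_right[OF a(2)] seg_subset_seg_left by blast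
  next
    case 3
    then show ?thesis using on_vw pq seg_subset_seg_left by blast
  next
    case 4
    then have "p \<in> seg v u" using pq seg_subset_seg_left by blast
    then show ?thesis using ends_mem_seg(1)[of u a] unfolding geodesic_cone_def by blast
  qed
qed

lemma geodesic_cones_disjoint:
  assumes "(a::'a) \<noteq> b" and "a \<in> seg v w" "b \<in> seg a w" "a \<in> seg u z" "b \<in> seg a z"
  shows "geodesic_cone v (seg u a) \<inter> geodesic_cone w (seg z b) = {}"
proof (rule ccontr)
  assume "geodesic_cone v (seg u a) \<inter> geodesic_cone w (seg z b) \<noteq> {}"
  then obtain p q q' where q: "q \<in> seg u a" "p \<in> seg v q" and q': "q' \<in> seg z b" "p \<in> seg w q'"
    by (auto simp: geodesic_cone_def)
  note on_seg = assms(2-5)[unfolded mem_seg_iff_dist]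
    q[unfolded mem_seg_iff_dist] q'[unfolded mem_seg_iff_dist]
  \<comment> \<open>going through p instead of a and b would shorten the geodesics v w and u z by 2 dist a b\<close>
  have "dist v a + dist u a + dist b w + dist z b + 2 * dist a b = dist v w + dist u z"
    using on_seg(1-4) dist_commute[of b z] by linarith
  also have "\<dots> \<le> (dist v p + dist p w) + (dist u q + dist q p + dist p q' + dist q' z)"
    using dist_triangle[of v w p] dist_triangle[of u z q] dist_triangle[of q z q']
      dist_triangle[of q q' p] by linarith
  also have "\<dots> = (dist v p + dist p q) + (dist w p + dist p q') + dist u q + dist z q'"
    by (simp add: dist_commute)
  also have "\<dots> = dist v q + dist w q' + dist u q + dist z q'"
    using on_seg(6,8) by linarith
  also have "\<dots> \<le> (dist v a + dist a q) + (dist w b + dist b q') + dist u q + dist z q'"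
    using dist_triangle[of v q a] dist_triangle[of w q' b] by linarith
  also have "\<dots> = dist v a + dist u a + dist b w + dist z b"
    using on_seg(5,7) dist_commute[of a q] dist_commute[of w b] dist_commute[of b q'] by linarith
  finally show False
    using assms(1) by simp
qed

lemma mem_seg_if_in_geodesic_cones_aligned:
  assumes ne: "(a::'a) \<noteq> b"
    and ab: "a \<in> seg x1 b" "b \<in> seg a x2" "a \<in> seg x3 b" "b \<in> seg a x4"
    and inter: "seg x1 x2 \<inter> seg x3 x4 \<subseteq> seg a b"
    and cones: "\<And>v. p \<in> geodesic_cone v (tri x1 x2 x3) \<inter> geodesic_cone v (tri x1 x2 x4)
                      \<inter> geodesic_cone v (tri x1 x3 x4) \<inter> geodesic_cone v (tri x2 x3 x4)"
  shows "p \<in> seg a b"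
proof -
  have a: "a \<in> seg x1 x2" "a \<in> seg x3 x4" "a \<in> seg x3 x2" "a \<in> seg x1 x4"
    using mem_seg_concat[OF ne] ab by blast+
  have b: "b \<in> seg x1 x2" "b \<in> seg x3 x4" "b \<in> seg x3 x2" "b \<in> seg x1 x4"
    using a ab seg_subset_seg_right by blast+
  have tris: "tri x1 x3 x4 = tri x1 x4 x3" "tri x1 x2 x4 = tri x4 x1 x2"
    "tri x2 x3 x4 = tri x4 x3 x2"
    by (metis tri_commute tri_rotate)+
  have "p \<in> geodesic_cone x3 (seg x1 a) \<or> p \<in> seg a x2"
    using geodesic_cone_tri_cases[of p x3 x1 x2 a] cones a by blast
  moreover have "p \<in> geodesic_cone x3 (seg x1 a) \<or> p \<in> seg a x4"
    using geodesic_cone_tri_cases[of p x3 x1 x4 a] cones[of x3] a unfolding tris by blast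
  moreover have "p \<in> geodesic_cone x2 (seg x4 b) \<or> p \<in> seg b x1"
    using geodesic_cone_tri_cases[of p x2 x4 x1 b] cones[of x2] b
      seg_commute[of x4 x1] seg_commute[of x2 x1]
    unfolding tris by blast
  moreover have "p \<in> geodesic_cone x2 (seg x4 b) \<or> p \<in> seg b x3"
    using geodesic_cone_tri_cases[of p x2 x4 x3 b] cones[of x2] b
      seg_commute[of x4 x3] seg_commute[of x2 x3]
    unfolding tris by blast
  moreover have "geodesic_cone x3 (seg x1 a) \<inter> geodesic_cone x2 (seg x4 b) = {}"
    using geodesic_cones_disjoint[OF ne] a(3,4) ab(2,4) by blast
  moreover have "seg a x2 \<inter> seg a x4 \<subseteq> seg a b"
    using seg_subset_seg_right[OF a(1)] seg_subset_seg_right[OF a(2)] inter by blast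
  moreover have "seg b x1 \<inter> seg b x3 \<subseteq> seg a b"
    using seg_subset_seg_left[OF b(1)] seg_subset_seg_left[OF b(2)] inter
      seg_commute[of b x1] seg_commute[of b x3] by blast
  ultimately show ?thesis by blast
qed

lemma mem_seg_if_in_geodesic_cones:
  assumes ne: "(a::'a) \<noteq> b" and inter: "seg x1 x2 \<inter> seg x3 x4 = seg a b"
    and cones: "\<And>v. p \<in> geodesic_cone v (tri x1 x2 x3) \<inter> geodesic_cone v (tri x1 x2 x4)
                      \<inter> geodesic_cone v (tri x1 x3 x4) \<inter> geodesic_cone v (tri x2 x3 x4)"
  shows "p \<in> seg a b"
proof -
  have ab: "a \<in> seg x1 x2" "b \<in> seg x1 x2" "a \<in> seg x3 x4" "b \<in> seg x3 x4"
    using ends_mem_seg[where x = a and y = b] unfolding inter[symmetric] by simp_all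
  have o12: "(a \<in> seg x1 b \<and> b \<in> seg a x2) \<or> (a \<in> seg x2 b \<and> b \<in> seg a x1)"
    by (rule mem_seg_order[OF ab(1,2)])
  have o34: "(a \<in> seg x3 b \<and> b \<in> seg a x4) \<or> (a \<in> seg x4 b \<and> b \<in> seg a x3)"
    by (rule mem_seg_order[OF ab(3,4)])
  have tris: "tri x2 x1 x3 = tri x1 x2 x3" "tri x2 x1 x4 = tri x1 x2 x4"
    "tri x1 x4 x3 = tri x1 x3 x4" "tri x2 x4 x3 = tri x2 x3 x4"
    by (metis tri_commute tri_rotate)+
  \<comment> \<open>swapping x1 with x2, or x3 with x4, reverses the order of a and b on that geodesic
    and preserves the other hypotheses\<close>
  have inter': "seg x1 x2 \<inter> seg x3 x4 \<subseteq> seg a b" "seg x2 x1 \<inter> seg x3 x4 \<subseteq> seg a b"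
    "seg x1 x2 \<inter> seg x4 x3 \<subseteq> seg a b" "seg x2 x1 \<inter> seg x4 x3 \<subseteq> seg a b"
    using inter seg_commute[of x1 x2] seg_commute[of x3 x4] by auto
  have cones': "p \<in> geodesic_cone v (tri x2 x1 x3) \<inter> geodesic_cone v (tri x2 x1 x4)
                      \<inter> geodesic_cone v (tri x2 x3 x4) \<inter> geodesic_cone v (tri x1 x3 x4)"
    "p \<in> geodesic_cone v (tri x1 x2 x4) \<inter> geodesic_cone v (tri x1 x2 x3)
                      \<inter> geodesic_cone v (tri x1 x4 x3) \<inter> geodesic_cone v (tri x2 x4 x3)"
    "p \<in> geodesic_cone v (tri x2 x1 x4) \<inter> geodesic_cone v (tri x2 x1 x3)
                      \<inter> geodesic_cone v (tri x2 x4 x3) \<inter> geodesic_cone v (tri x1 x4 x3)" for v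
    using cones[of v] unfolding tris by auto
  from o12 o34 show ?thesis
  proof (elim disjE conjE)
    assume "a \<in> seg x1 b" "b \<in> seg a x2" "a \<in> seg x3 b" "b \<in> seg a x4"
    then show ?thesis
      by (rule mem_seg_if_in_geodesic_cones_aligned[OF ne _ _ _ _ inter'(1) cones])
  next
    assume "a \<in> seg x2 b" "b \<in> seg a x1" "a \<in> seg x3 b" "b \<in> seg a x4"
    then show ?thesis
      by (rule mem_seg_if_in_geodesic_cones_aligned[OF ne _ _ _ _ inter'(2) cones'(1)])
  next
    assume "a \<in> seg x1 b" "b \<in> seg a x2" "a \<in> seg x4 b" "b \<in> seg a x3"
    then show ?thesis
      by (rule mem_seg_if_in_geodesic_cones_aligned[OF ne _ _ _ _ inter'(3) cones'(2)])
  next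
    assume "a \<in> seg x2 b" "b \<in> seg a x1" "a \<in> seg x4 b" "b \<in> seg a x3"
    then show ?thesis
      by (rule mem_seg_if_in_geodesic_cones_aligned[OF ne _ _ _ _ inter'(4) cones'(3)])
  qed
qed

end

theorem theorem8p1:
  fixes C :: "'a::metric_space cell set" and x1 x2 x3 x4 :: 'a
  assumes "euclidean_polygonal_complex C"
    and "CAT0 TYPE('a)"
    and "\<exists>a b. a \<noteq> b \<and> seg x1 x2 \<inter> seg x3 x4 = seg a b"
  shows "full_tri x1 x2 x3 \<inter> full_tri x1 x2 x4 \<inter> full_tri x1 x3 x4 \<inter> full_tri x2 x3 x4
           = seg x1 x2 \<inter> seg x3 x4"
proof
  have space: "CAT0_space TYPE('a)"
    using assms(2) by (rule CAT0_space.intro)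
  obtain a b where ne: "a \<noteq> b" and inter: "seg x1 x2 \<inter> seg x3 x4 = seg a b"
    using assms(3) by blast
  show "full_tri x1 x2 x3 \<inter> full_tri x1 x2 x4 \<inter> full_tri x1 x3 x4 \<inter> full_tri x2 x3 x4
          \<subseteq> seg x1 x2 \<inter> seg x3 x4"
  proof
    fix p assume "p \<in> full_tri x1 x2 x3 \<inter> full_tri x1 x2 x4 \<inter> full_tri x1 x3 x4 \<inter> full_tri x2 x3 x4"
    then have "p \<in> geodesic_cone v (tri x1 x2 x3) \<inter> geodesic_cone v (tri x1 x2 x4)
                 \<inter> geodesic_cone v (tri x1 x3 x4) \<inter> geodesic_cone v (tri x2 x3 x4)" for v
      using CAT0_space.full_tri_subset_geodesic_cone[OF space] by blast
    then have "p \<in> seg a b"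
      by (rule CAT0_space.mem_seg_if_in_geodesic_cones[OF space ne inter])
    then show "p \<in> seg x1 x2 \<inter> seg x3 x4"
      using inter by simp
  qed
  show "seg x1 x2 \<inter> seg x3 x4
          \<subseteq> full_tri x1 x2 x3 \<inter> full_tri x1 x2 x4 \<inter> full_tri x1 x3 x4 \<inter> full_tri x2 x3 x4"
    unfolding full_tri_def tri_def by blast
qed

end
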